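(* Let $\lambda\neq0$, $u_0$ smooth and $1$-periodic with $M_0=\max u_0'>0$ attained at the points $\overline\alpha_i$ and $m_0=\min u_0'<0$ attained at the points $\underline\alpha_j$. Let $\eta_*=1/(\lambda M_0)$ if $\lambda>0$ and $\eta_*=1/(\lambda m_0)$ if $\lambda<0$. Then $1-\lambda\eta u_0'(\alpha)>0$ for all $\eta\in[0,\eta_* )$ and $\alpha\in[0,1]$, and for the solution $u$ of $u_{xt}+uu_{xx}-\lambda u_x^2=-(\lambda+1)\int_0^1u_x^2\,dx$, $u(x,0)=u_0$ (periodic), at every time $t$ with $\eta(t)\in[0,\eta_* )$ one has, for all $i,j$, $$M(t)=u_x(\gamma(\overline\alpha_i,t),t),\qquad m(t)=u_x(\gamma(\underline\alpha_j,t),t),$$ and $u_x(\gamma(\alpha_1,t),t)=u_x(\gamma(\alpha_2,t),t)$ if and only if $u_0'(\alpha_1)=u_0'(\alpha_2)$.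
   Context: $\gamma$ is the characteristic: $\dot\gamma=u(\gamma,t)$, $\gamma(\alpha,0)=\alpha$. $M(t)=\sup_\alpha u_x(\gamma(\alpha,t),t)$, $m(t)=\inf_\alpha u_x(\gamma(\alpha,t),t)$. $\eta(t)$ solves $\dot\eta=\left(\int_0^1(1-\lambda\eta u_0'(\alpha))^{-1/\lambda}d\alpha\right)^{-2\lambda}$, $\eta(0)=0$, and along characteristics $u_x(\gamma(\alpha,t),t)=\frac{1}{\lambda\eta\bar{\mathcal K}_0^{2\lambda}}\left(\frac1{\mathcal J}-\frac{\bar{\mathcal K}_1}{\bar{\mathcal K}_0}\right)$ with $\mathcal J(\alpha,t)=1-\lambda\eta(t)u_0'(\alpha)$, $\bar{\mathcal K}_i(t)=\int_0^1\mathcal J^{-i-1/\lambda}d\alpha$. *)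

theory Defs
  imports "HOL-Analysis.Analysis"
begin

definition smooth_fun :: "(real \<Rightarrow> real) \<Rightarrow> bool" where
  "smooth_fun f \<longleftrightarrow> (\<forall>n x. ((deriv ^^ n) f) differentiable (at x))"

text \<open>J(alpha,t) = 1 - lambda eta(t) u0'(alpha), given eta = e.\<close>
definition Jfun :: "real \<Rightarrow> (real \<Rightarrow> real) \<Rightarrow> real \<Rightarrow> real \<Rightarrow> real" where
  "Jfun lam u0 e \<alpha> = 1 - lam * e * deriv u0 \<alpha>"

definition Kbar :: "real \<Rightarrow> (real \<Rightarrow> real) \<Rightarrow> real \<Rightarrow> real \<Rightarrow> real" where
  "Kbar lam u0 i e = integral {0..1} (\<lambda>\<alpha>. Jfun lam u0 e \<alpha> powr (- i - 1 / lam))"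

end

theory Submission
  imports Defs "HOL-Library.Periodic_Fun"
begin

text \<open>
  Along the characteristic from \<open>\<alpha>\<close> the solution formula expresses \<open>u\<^sub>x\<close> as
  \<open>\<phi>(u\<^sub>0'(\<alpha>))\<close> with \<open>\<phi>(s) = c (1/(1 - \<lambda>\<eta>s) - k)\<close>, where \<open>c \<lambda> \<eta> = K\<^sub>0 ^ (-2\<lambda>) > 0\<close>
  since \<open>K\<^sub>0\<close> is the integral of a positive function.
  For \<open>0 \<le> \<eta> < \<eta>\<^sub>*\<close> the denominator \<open>1 - \<lambda>\<eta>s\<close> is positive for \<open>s \<in> [m\<^sub>0, M\<^sub>0]\<close>,
  so \<open>\<phi>\<close> is strictly increasing there (at \<open>t = 0\<close> it is the identity).
  A strictly increasing reparametrisation of \<open>u\<^sub>0'\<close> attains its extrema exactly where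
  \<open>u\<^sub>0'\<close> does and has the same level sets. The formula is available for \<open>t > 0\<close> because
  then \<open>\<eta>(t) > 0\<close>: \<open>\<eta>\<close> is nondecreasing and \<open>\<eta>' = 1\<close> wherever \<open>\<eta> = 0\<close>.
\<close>

lemma range_eq_image_unit_interval_if_periodic:
  fixes g :: "real \<Rightarrow> 'a"
  assumes "\<And>x. g (x + 1) = g x"
  shows "range g = g ` {0..1}"
proof -
  interpret periodic_fun_simple' g by unfold_locales (rule assms)
  have "g x = g (frac x)" for x
    using plus_of_int[of "frac x" "\<lfloor>x\<rfloor>"] by (simp add: frac_def)
  moreover have "frac x \<in> {0..1}" for x
    using frac_lt_1[of x] by (simp add: frac_ge_0 less_imp_le)
  ultimately show ?thesis by blast
qed

lemma bdd_range_if_continuous_periodic: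
  fixes g :: "real \<Rightarrow> real"
  assumes "continuous_on UNIV g" and "\<And>x. g (x + 1) = g x"
  shows "bdd_above (range g)" and "bdd_below (range g)"
proof -
  have "range g = g ` {0..1}"
    by (rule range_eq_image_unit_interval_if_periodic) (rule assms(2))
  moreover have "compact (g ` {0..1})"
    by (rule compact_continuous_image[OF continuous_on_subset[OF assms(1)]]) auto
  ultimately have "compact (range g)" by simp
  then show "bdd_above (range g)" and "bdd_below (range g)"
    by (simp_all add: compact_imp_bounded bounded_imp_bdd_above bounded_imp_bdd_below)
qed

lemma deriv_periodic:
  fixes f :: "real \<Rightarrow> real"
  assumes "\<And>x. f (x + 1) = f x"
  shows "deriv f (x + 1) = deriv f x"
  unfolding deriv_def DERIV_shift[of f _ x 1] assms ..

lemma continuous_deriv_if_smooth_fun: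
  assumes "smooth_fun f"
  shows "continuous_on UNIV (deriv f)"
proof -
  have "deriv f differentiable at x" for x
    using assms unfolding smooth_fun_def by (metis funpow_0 funpow_Suc_right o_apply)
  then show ?thesis
    by (intro continuous_at_imp_continuous_on ballI differentiable_imp_continuous_within)
qed

lemma bdd_range_deriv_if_smooth_periodic:
  assumes "smooth_fun f" and "\<And>x. f (x + 1) = f x"
  shows "bdd_above (range (deriv f))" and "bdd_below (range (deriv f))"
  using bdd_range_if_continuous_periodic[OF continuous_deriv_if_smooth_fun[OF assms(1)]]
    deriv_periodic[of f, OF assms(2)] by simp_all

lemma one_minus_pos_below_blowup:
  fixes lam e x M m :: real
  assumes "lam \<noteq> 0" and "m < 0" and "0 < M" and "m \<le> x" and "x \<le> M"
    and "0 \<le> e" and "e < (if lam > 0 then 1 / (lam * M) else 1 / (lam * m))"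
  shows "0 < 1 - lam * e * x"
proof (cases "lam > 0")
  case True
  then have "e * (lam * M) < 1" and "lam * e * x \<le> lam * e * M"
    using assms by (simp_all add: less_divide_eq mult_left_mono)
  then show ?thesis by (simp add: algebra_simps)
next
  case False
  then have "lam < 0" using assms(1) by simp
  then have "e * (lam * m) < 1" and "lam * e * x \<le> lam * e * m"
    using False assms by (simp_all add: less_divide_eq mult_neg_neg mult_left_mono_neg
        mult_nonneg_nonpos2)
  then show ?thesis by (simp add: algebra_simps)
qed

lemma strict_mono_on_scaled_reciprocal:
  fixes b c k :: real
  assumes "0 < b * c"
  shows "strict_mono_on {x. 0 < 1 - b * x} (\<lambda>x. c * (1 / (1 - b * x) - k))"
proof (rule strict_mono_onI)
  fix x y assume "x \<in> {x. 0 < 1 - b * x}" "y \<in> {x. 0 < 1 - b * x}" "x < y"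
  then have x: "0 < 1 - b * x" and y: "0 < 1 - b * y" by simp_all
  have "0 < (1 - b * x) * (1 - b * y)" and "0 < b * c * (y - x)"
    using x y assms \<open>x < y\<close> by simp_all
  moreover have "c * (1 / (1 - b * y) - k) - c * (1 / (1 - b * x) - k)
      = b * c * (y - x) / ((1 - b * x) * (1 - b * y))"
    using x y by (simp add: field_simps)
  ultimately show "c * (1 / (1 - b * x) - k) < c * (1 / (1 - b * y) - k)"
    by (smt (verit) divide_pos_pos)
qed

lemma extrema_and_level_sets_of_strict_mono_on_comp:
  fixes d :: "'a \<Rightarrow> real" and \<phi> :: "real \<Rightarrow> real"
  assumes \<phi>: "strict_mono_on (range d) \<phi>"
    and bounds: "\<And>a. m \<le> d a" "\<And>a. d a \<le> M"
  shows "(\<forall>ai. d ai = M \<longrightarrow> \<phi> (d ai) = (SUP a. \<phi> (d a)))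
       \<and> (\<forall>aj. d aj = m \<longrightarrow> \<phi> (d aj) = (INF a. \<phi> (d a)))
       \<and> (\<forall>a1 a2. \<phi> (d a1) = \<phi> (d a2) \<longleftrightarrow> d a1 = d a2)"
proof -
  have mono: "\<phi> (d a) \<le> \<phi> (d b)" if "d a \<le> d b" for a b
    using strict_mono_on_leD[OF \<phi> rangeI rangeI that] .
  have "\<phi> (d ai) = (SUP a. \<phi> (d a))" if "d ai = M" for ai
  proof (rule cSup_eq_maximum[symmetric])
    show "\<And>y. y \<in> range (\<lambda>a. \<phi> (d a)) \<Longrightarrow> y \<le> \<phi> (d ai)"
      using mono bounds(2) that by blast
  qed simp
  moreover have "\<phi> (d aj) = (INF a. \<phi> (d a))" if "d aj = m" for aj
  proof (rule cInf_eq_minimum[symmetric])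
    show "\<And>y. y \<in> range (\<lambda>a. \<phi> (d a)) \<Longrightarrow> \<phi> (d aj) \<le> y"
      using mono bounds(1) that by blast
  qed simp
  moreover have "\<phi> (d a1) = \<phi> (d a2) \<longleftrightarrow> d a1 = d a2" for a1 a2
    using strict_mono_on_eqD[OF \<phi>, of "d a1" "d a2"] by auto
  ultimately show ?thesis by blast
qed

lemma integral_pos_if_continuous_pos:
  fixes f :: "real \<Rightarrow> real"
  assumes "a < b" and "continuous_on {a..b} f" and "\<And>x. x \<in> {a..b} \<Longrightarrow> 0 < f x"
  shows "0 < integral {a..b} f"
proof -
  obtain x0 where x0: "x0 \<in> {a..b}" and min: "\<And>x. x \<in> {a..b} \<Longrightarrow> f x0 \<le> f x"
    using continuous_attains_inf[OF compact_Icc _ assms(2)] assms(1) by auto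
  have "f x0 * (b - a) \<le> integral {a..b} f"
    using integral_le[of "\<lambda>_. f x0" "{a..b}" f] min assms
    by (simp add: integrable_continuous_interval mult.commute)
  moreover have "0 < f x0 * (b - a)" using assms x0 by simp
  ultimately show ?thesis by linarith
qed

lemma Kbar_pos:
  assumes "continuous_on {0..1} (deriv u0)" and "\<And>\<alpha>. \<alpha> \<in> {0..1} \<Longrightarrow> 0 < Jfun lam u0 e \<alpha>"
  shows "0 < Kbar lam u0 i e"
proof -
  have "continuous_on {0..1} (Jfun lam u0 e)"
    unfolding Jfun_def[abs_def] by (intro continuous_intros assms(1))
  moreover have "\<forall>\<alpha>\<in>{0..1}. 0 \<le> Jfun lam u0 e \<alpha> \<and> (Jfun lam u0 e \<alpha> = 0 \<longrightarrow> 0 < - i - 1 / lam)"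
  proof
    fix \<alpha> :: real assume "\<alpha> \<in> {0..1}"
    then have "0 < Jfun lam u0 e \<alpha>" by (rule assms(2))
    then show "0 \<le> Jfun lam u0 e \<alpha> \<and> (Jfun lam u0 e \<alpha> = 0 \<longrightarrow> 0 < - i - 1 / lam)" by simp
  qed
  ultimately have "continuous_on {0..1} (\<lambda>\<alpha>. Jfun lam u0 e \<alpha> powr (- i - 1 / lam))"
    by (intro continuous_on_powr' continuous_intros)
  moreover have "0 < Jfun lam u0 e \<alpha> powr (- i - 1 / lam)" if "\<alpha> \<in> {0..1}" for \<alpha>
    using assms(2)[OF that] by simp
  ultimately show ?thesis
    unfolding Kbar_def by (intro integral_pos_if_continuous_pos) auto
qed

definition ux_profile :: "real \<Rightarrow> (real \<Rightarrow> real) \<Rightarrow> real \<Rightarrow> real \<Rightarrow> real" where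
  "ux_profile lam u0 e s = 1 / (lam * e * Kbar lam u0 0 e powr (2 * lam))
                             * (1 / (1 - lam * e * s) - Kbar lam u0 1 e / Kbar lam u0 0 e)"

lemma strict_mono_on_ux_profile:
  assumes "lam \<noteq> 0" and "0 < e" and "continuous_on {0..1} (deriv u0)"
    and J_pos: "\<And>\<alpha>. 0 < Jfun lam u0 e \<alpha>"
  shows "strict_mono_on (range (deriv u0)) (ux_profile lam u0 e)"
  unfolding ux_profile_def[abs_def]
proof (rule monotone_on_subset[OF strict_mono_on_scaled_reciprocal])
  have "0 < Kbar lam u0 0 e"
    using assms by (intro Kbar_pos) auto
  then show "0 < lam * e * (1 / (lam * e * Kbar lam u0 0 e powr (2 * lam)))"
    using assms(1,2) by simp
  show "range (deriv u0) \<subseteq> {x. 0 < 1 - lam * e * x}"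
    using J_pos by (auto simp: Jfun_def)
qed

lemma pos_if_deriv_nonneg_and_pos_at_zeros:
  fixes f f' :: "real \<Rightarrow> real"
  assumes f0: "f 0 = 0"
    and deriv: "\<And>s. 0 \<le> s \<Longrightarrow> s < T \<Longrightarrow> (f has_real_derivative f' s) (at s within {0..<T})"
    and nonneg: "\<And>s. 0 \<le> s \<Longrightarrow> s < T \<Longrightarrow> 0 \<le> f' s"
    and pos_at_zeros: "\<And>s. 0 \<le> s \<Longrightarrow> s < T \<Longrightarrow> f s = 0 \<Longrightarrow> 0 < f' s"
    and t: "0 < t" "t < T"
  shows "0 < f t"
proof (rule ccontr)
  have deriv_at: "(f has_real_derivative f' s) (at s)" if "0 < s" "s < T" for s
  proof -
    have "at s within {0..<T} = at s"
      by (rule at_within_open_subset[of s "{0<..<T}"]) (use that in auto)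
    then show ?thesis using deriv[of s] that by simp
  qed
  have cont: "continuous_on {0..<T} f"
    unfolding continuous_on_eq_continuous_within
    using deriv by (metis DERIV_continuous atLeastLessThan_iff)
  have mono: "f a \<le> f b" if "0 \<le> a" "a \<le> b" "b < T" for a b
  proof (rule DERIV_nonneg_imp_increasing_open[OF \<open>a \<le> b\<close>])
    show "continuous_on {a..b} f"
      using that by (intro continuous_on_subset[OF cont]) auto
  next
    fix x assume "a < x" "x < b"
    then show "\<exists>y. DERIV f x :> y \<and> 0 \<le> y"
      using that deriv_at[of x] nonneg[of x] by auto
  qed
  assume "\<not> 0 < f t"
  then have zero: "f s = 0" if "0 \<le> s" "s \<le> t" for s
    using mono[of 0 s] mono[of s t] that t f0 by force
  define s where "s = t / 2"
  have s: "0 < s" "s < t" using t by (auto simp: s_def)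
  have "((\<lambda>_. 0) has_real_derivative 0) (at s)" by simp
  then have "(f has_real_derivative 0) (at s)"
    by (rule has_field_derivative_transform_within_open[of _ _ _ "{0<..<t}"]) (use s zero in auto)
  then have "f' s = 0" using DERIV_unique deriv_at[of s] s t by auto
  then show False using pos_at_zeros[of s] zero[of s] s t by simp
qed

lemma eta_pos:
  assumes "\<eta> 0 = 0"
    and "\<And>t. 0 \<le> t \<Longrightarrow> t < T \<Longrightarrow>
           (\<eta> has_real_derivative
              (integral {0..1} (\<lambda>\<alpha>. (1 - lam * \<eta> t * deriv u0 \<alpha>) powr (- 1 / lam)))
                powr (- 2 * lam)) (at t within {0..<T})"
    and "0 < t" and "t < T"
  shows "0 < \<eta> t"
  by (rule pos_if_deriv_nonneg_and_pos_at_zeros[OF assms(1,2) _ _ assms(3,4)]) simp_all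

theorem mainTheorem8:
  fixes lam T :: real
    and u0 :: "real \<Rightarrow> real"
    and u ux uxx uxt :: "real \<Rightarrow> real \<Rightarrow> real"
    and \<gamma> :: "real \<Rightarrow> real \<Rightarrow> real"
    and \<eta> :: "real \<Rightarrow> real"
  defines "M0 \<equiv> (SUP \<alpha>. deriv u0 \<alpha>)"
    and "m0 \<equiv> (INF \<alpha>. deriv u0 \<alpha>)"
    and "\<eta>s \<equiv> (if lam > 0 then 1 / (lam * (SUP \<alpha>. deriv u0 \<alpha>)) else 1 / (lam * (INF \<alpha>. deriv u0 \<alpha>)))"
  assumes lam: "lam \<noteq> 0"
    and u0_smooth: "smooth_fun u0"
    and u0_per: "\<And>x. u0 (x + 1) = u0 x"
    and M0_pos: "M0 > 0"
    and m0_neg: "m0 < 0"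
    and T_pos: "T > 0"
    \<comment> \<open>u is a classical periodic solution of the PDE on [0,T)\<close>
    and u_per: "\<And>x t. 0 \<le> t \<Longrightarrow> t < T \<Longrightarrow> u (x + 1) t = u x t"
    and u_init: "\<And>x. u x 0 = u0 x"
    and u_x: "\<And>x t. 0 \<le> t \<Longrightarrow> t < T \<Longrightarrow> ((\<lambda>y. u y t) has_real_derivative ux x t) (at x)"
    and u_xx: "\<And>x t. 0 \<le> t \<Longrightarrow> t < T \<Longrightarrow> ((\<lambda>y. ux y t) has_real_derivative uxx x t) (at x)"
    and u_xt: "\<And>x t. 0 \<le> t \<Longrightarrow> t < T \<Longrightarrow>
                 ((\<lambda>s. ux x s) has_real_derivative uxt x t) (at t within {0..<T})"
    and u_t: "\<And>x t. 0 \<le> t \<Longrightarrow> t < T \<Longrightarrow> (\<lambda>s. u x s) differentiable (at t within {0..<T})"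
    and u_cont: "continuous_on (UNIV \<times> {0..<T}) (\<lambda>(x, t). u x t)"
    and ux_cont: "continuous_on (UNIV \<times> {0..<T}) (\<lambda>(x, t). ux x t)"
    and pde: "\<And>x t. 0 \<le> t \<Longrightarrow> t < T \<Longrightarrow>
                uxt x t + u x t * uxx x t - lam * (ux x t)\<^sup>2
                  = - (lam + 1) * integral {0..1} (\<lambda>y. (ux y t)\<^sup>2)"
    \<comment> \<open>characteristics\<close>
    and \<gamma>_init: "\<And>\<alpha>. \<gamma> \<alpha> 0 = \<alpha>"
    and \<gamma>_ode: "\<And>\<alpha> t. 0 \<le> t \<Longrightarrow> t < T \<Longrightarrow>
                ((\<gamma> \<alpha>) has_real_derivative u (\<gamma> \<alpha> t) t) (at t within {0..<T})"
    \<comment> \<open>the auxiliary function eta\<close>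
    and \<eta>_init: "\<eta> 0 = 0"
    and \<eta>_ode: "\<And>t. 0 \<le> t \<Longrightarrow> t < T \<Longrightarrow>
                (\<eta> has_real_derivative
                   (integral {0..1} (\<lambda>\<alpha>. (1 - lam * \<eta> t * deriv u0 \<alpha>) powr (- 1 / lam)))
                     powr (- 2 * lam)) (at t within {0..<T})"
    \<comment> \<open>solution formula along characteristics (from the context)\<close>
    and rep: "\<And>\<alpha> t. 0 \<le> t \<Longrightarrow> t < T \<Longrightarrow> 0 < \<eta> t \<Longrightarrow> \<eta> t < \<eta>s \<Longrightarrow>
                ux (\<gamma> \<alpha> t) t
                  = 1 / (lam * \<eta> t * Kbar lam u0 0 (\<eta> t) powr (2 * lam))
                    * (1 / Jfun lam u0 (\<eta> t) \<alpha> - Kbar lam u0 1 (\<eta> t) / Kbar lam u0 0 (\<eta> t))"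
  shows "(\<forall>e \<in> {0..<\<eta>s}. \<forall>\<alpha> \<in> {0..1}. 1 - lam * e * deriv u0 \<alpha> > 0)
       \<and> (\<forall>t. 0 \<le> t \<and> t < T \<and> \<eta> t \<in> {0..<\<eta>s} \<longrightarrow>
            (\<forall>\<alpha>i. deriv u0 \<alpha>i = M0 \<longrightarrow> ux (\<gamma> \<alpha>i t) t = (SUP \<alpha>. ux (\<gamma> \<alpha> t) t))
          \<and> (\<forall>\<alpha>j. deriv u0 \<alpha>j = m0 \<longrightarrow> ux (\<gamma> \<alpha>j t) t = (INF \<alpha>. ux (\<gamma> \<alpha> t) t))
          \<and> (\<forall>\<alpha>1 \<alpha>2. ux (\<gamma> \<alpha>1 t) t = ux (\<gamma> \<alpha>2 t) t \<longleftrightarrow> deriv u0 \<alpha>1 = deriv u0 \<alpha>2))"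
proof -
  define d where "d = deriv u0"
  have d_bounds: "m0 \<le> d a" "d a \<le> M0" for a
    using bdd_range_deriv_if_smooth_periodic[OF u0_smooth u0_per]
    by (auto simp: M0_def m0_def d_def intro: cInf_lower cSup_upper)
  have "\<eta>s = (if lam > 0 then 1 / (lam * M0) else 1 / (lam * m0))"
    by (simp add: \<eta>s_def M0_def m0_def)
  then have J_pos: "0 < 1 - lam * e * d a" if "0 \<le> e" "e < \<eta>s" for e a
    using one_minus_pos_below_blowup[OF lam m0_neg M0_pos d_bounds that(1)] that(2) by simp
  have profile: "\<exists>\<phi>. strict_mono_on (range d) \<phi> \<and> (\<forall>a. ux (\<gamma> a t) t = \<phi> (d a))"
    if t: "0 \<le> t" "t < T" "\<eta> t \<in> {0..<\<eta>s}" for t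
  proof (cases "t = 0")
    case True
    have "ux a 0 = d a" for a
      using u_x[of 0 a] T_pos by (simp add: u_init d_def DERIV_imp_deriv)
    then show ?thesis
      using True \<gamma>_init by (intro exI[of _ id]) (simp add: strict_mono_on_def)
  next
    case False
    have "0 < \<eta> t"
      using eta_pos[OF \<eta>_init \<eta>_ode] t False by simp
    then have "strict_mono_on (range d) (ux_profile lam u0 (\<eta> t))"
      using t J_pos[of "\<eta> t"] continuous_deriv_if_smooth_fun[OF u0_smooth] unfolding d_def
      by (intro strict_mono_on_ux_profile[OF lam]) (auto simp: Jfun_def intro: continuous_on_subset)
    moreover have "ux (\<gamma> a t) t = ux_profile lam u0 (\<eta> t) (d a)" for a
      using rep[of t a] t \<open>0 < \<eta> t\<close> by (simp add: ux_profile_def Jfun_def d_def)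
    ultimately show ?thesis by blast
  qed
  show ?thesis
  proof (rule conjI[OF _ allI[OF impI]], goal_cases)
    case 1
    show ?case using J_pos by (simp add: d_def)
  next
    case (2 t)
    then obtain \<phi> where \<phi>: "strict_mono_on (range d) \<phi>" and ux_eq: "\<And>a. ux (\<gamma> a t) t = \<phi> (d a)"
      using profile by blast
    show ?case
      using extrema_and_level_sets_of_strict_mono_on_comp[OF \<phi> d_bounds]
      unfolding ux_eq d_def .
  qed
qed

end
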